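(* Let $\mathsf B=(E,\mapsto,\#)$ be a bundle event structure such that every event $e\in E$ belongs to some finite configuration of $\mathsf B$. Define the net $U=\langle S,E,F,\mathsf m\rangle$ by $S=\{(e,\ast)\mid e\in E\}\cup\{\{e,e'\}\mid e\ \#\ e'\}\cup\{(Y,e)\mid Y\mapsto e\}\cup\{(\ast,e)\mid e\in E\}$, $F=\{(s,e)\mid s=(e,\ast)\ \lor\ s=(Y,e)\ \lor\ (s=\{e,e'\}\text{ for some }e')\}\cup\{(e,s)\mid s=(\ast,e)\ \lor\ (s=(Y,e')\land e\in Y)\}$, $\mathsf m=\{(e,\ast)\mid e\in E\}\cup\{\{e,e'\}\mid e\ \#\ e'\}$ (one token in each listed place). Then $U$ is an unravel net, and a finite set $X\subseteq E$ is a configuration of $\mathsf B$ if and only if $X$ is a state of $U$.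
   Context: A bundle event structure is a triple $\mathsf B=(E,\mapsto,\#)$ where $E$ is a set of events, $\#\subseteq E\times E$ is an irreflexive symmetric conflict relation, and $\mapsto\subseteq \mathcal P_{\mathrm{fin}}(E)\times E$ is the enabling (bundle) relation such that if $X\mapsto e$ then any two distinct elements of $X$ are in conflict, and for each $e$ the set $\bigcup\{X\mid X\mapsto e\}$ is finite. A set $X\subseteq E$ is a configuration of $\mathsf B$ if it is conflict free (no two distinct elements in conflict) and there is an enumeration $e_1,e_2,\dots$ of $X$ such that for every $i$ and every bundle $Z\mapsto e_i$ one has $Z\cap\{e_1,\dots,e_{i-1}\}\neq\emptyset$. A net $N=\langle S,T,F,\mathsf m\rangle$ consists of disjoint sets $S$ (places) and $T$ (transitions), flow relation $F\subseteq (S\times T)\cup(T\times S)$ and initial marking $\mathsf m$; ${}^\bullet x=\{y\mid (y,x)\in F\}$, $x^\bullet=\{y\mid (x,y)\in F\}$. A transition $t$ is enabled at marking $m$ if ${}^\bullet t\subseteq m$; firing yields $m-{}^\bullet t+t^\bullet$. A state is the multiset of transitions of a finite firing sequence from $\mathsf m$; $\mathrm{St}(N)$ is the set of states and $\lfloor X\rfloor$ the support of a multiset $X$. A net is safe if every reachable marking has at most one token per place. The subnet generated by $T'\subseteq T$ has transitions $T'$, the places connected by $F$ to some transition of $T'$, and $F$ and $\mathsf m$ restricted accordingly. A net is conflict-free if $|s^\bullet|\le1$ for every place $s$, and acyclic if the reflexive transitive closure of $F$ is a partial order. An unravel net is a safe net $U$ such that (i) for each $X\in\mathrm{St}(U)$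 the subnet generated by $\lfloor X\rfloor$ is acyclic and conflict-free, and (ii) every transition belongs to $\lfloor X\rfloor$ for some state $X$. *)

theory Defs
  imports Main "HOL-Library.Multiset"
begin

text \<open>A bundle event structure is given by events E, enabling (bundle) relation bun
  (pairs (X, e) meaning X |-> e) and conflict relation conf.\<close>

definition bes :: "'e set \<Rightarrow> ('e set \<times> 'e) set \<Rightarrow> 'e rel \<Rightarrow> bool" where
  "bes E bun conf \<longleftrightarrow>
     conf \<subseteq> E \<times> E \<and> irrefl conf \<and> sym conf \<and>
     (\<forall>(X, e) \<in> bun. finite X \<and> X \<subseteq> E \<and> e \<in> E) \<and>
     (\<forall>(X, e) \<in> bun. \<forall>x\<in>X. \<forall>y\<in>X. x \<noteq> y \<longrightarrow> (x, y) \<in> conf) \<and>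
     (\<forall>e. finite (\<Union>{X. (X, e) \<in> bun}))"

definition conflict_free :: "'e rel \<Rightarrow> 'e set \<Rightarrow> bool" where
  "conflict_free conf X \<longleftrightarrow> (\<forall>x\<in>X. \<forall>y\<in>X. x \<noteq> y \<longrightarrow> (x, y) \<notin> conf)"

text \<open>Configuration: conflict free, and there is an enumeration e_0, e_1, ... (finite or
  infinite, indexed by a down-closed set I of naturals) such that every bundle of e_i
  meets the set of earlier events.\<close>

definition bes_config :: "'e set \<Rightarrow> ('e set \<times> 'e) set \<Rightarrow> 'e rel \<Rightarrow> 'e set \<Rightarrow> bool" where
  "bes_config E bun conf X \<longleftrightarrow>
     X \<subseteq> E \<and> conflict_free conf X \<and>
     (\<exists>(f :: nat \<Rightarrow> 'e) (I :: nat set).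
        (\<forall>i\<in>I. \<forall>j<i. j \<in> I) \<and> bij_betw f I X \<and>
        (\<forall>i\<in>I. \<forall>Z. (Z, f i) \<in> bun \<longrightarrow> Z \<inter> f ` {..<i} \<noteq> {}))"

text \<open>Places of type 'p and transitions of type 't (hence disjoint); the flow relation
  lives on the disjoint union of nodes; markings are functions to nat (possibly
  infinitely many tokens in total).\<close>

record ('p, 't) net =
  places :: "'p set"
  trans :: "'t set"
  flow :: "('p + 't) rel"
  init :: "'p \<Rightarrow> nat"

type_synonym 'p marking = "'p \<Rightarrow> nat"

definition is_net :: "('p, 't) net \<Rightarrow> bool" where
  "is_net N \<longleftrightarrow>
     flow N \<subseteq> (Inl ` places N \<times> Inr ` trans N) \<union> (Inr ` trans N \<times> Inl ` places N) \<and>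
     (\<forall>s. init N s > 0 \<longrightarrow> s \<in> places N)"

definition preset :: "('p, 't) net \<Rightarrow> 't \<Rightarrow> 'p set" where
  "preset N t = {s. (Inl s, Inr t) \<in> flow N}"

definition postset :: "('p, 't) net \<Rightarrow> 't \<Rightarrow> 'p set" where
  "postset N t = {s. (Inr t, Inl s) \<in> flow N}"

definition enabled :: "('p, 't) net \<Rightarrow> 'p marking \<Rightarrow> 't \<Rightarrow> bool" where
  "enabled N m t \<longleftrightarrow> t \<in> trans N \<and> (\<forall>s \<in> preset N t. 1 \<le> m s)"

definition fire :: "('p, 't) net \<Rightarrow> 'p marking \<Rightarrow> 't \<Rightarrow> 'p marking" where
  "fire N m t = (\<lambda>s. m s - (if s \<in> preset N t then 1 else 0)
                      + (if s \<in> postset N t then 1 else 0))"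

fun fireseq :: "('p, 't) net \<Rightarrow> 'p marking \<Rightarrow> 't list \<Rightarrow> 'p marking \<Rightarrow> bool" where
  "fireseq N m [] m' \<longleftrightarrow> m' = m"
| "fireseq N m (t # ts) m' \<longleftrightarrow> enabled N m t \<and> fireseq N (fire N m t) ts m'"

definition reachable :: "('p, 't) net \<Rightarrow> 'p marking set" where
  "reachable N = {m. \<exists>ts. fireseq N (init N) ts m}"

definition states :: "('p, 't) net \<Rightarrow> 't multiset set" where
  "states N = {mset ts | ts. \<exists>m. fireseq N (init N) ts m}"

definition safe :: "('p, 't) net \<Rightarrow> bool" where
  "safe N \<longleftrightarrow> (\<forall>m \<in> reachable N. \<forall>s. m s \<le> 1)"

definition subnet :: "('p, 't) net \<Rightarrow> 't set \<Rightarrow> ('p, 't) net" where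
  "subnet N T' =
     (let P' = {s \<in> places N. \<exists>t\<in>T'. (Inl s, Inr t) \<in> flow N \<or> (Inr t, Inl s) \<in> flow N}
      in \<lparr> places = P', trans = T',
           flow = flow N \<inter> ((Inl ` P' \<times> Inr ` T') \<union> (Inr ` T' \<times> Inl ` P')),
           init = (\<lambda>s. if s \<in> P' then init N s else 0) \<rparr>)"

definition net_conflict_free :: "('p, 't) net \<Rightarrow> bool" where
  "net_conflict_free N \<longleftrightarrow>
     (\<forall>s \<in> places N. \<forall>t1 t2. (Inl s, Inr t1) \<in> flow N \<and> (Inl s, Inr t2) \<in> flow N \<longrightarrow> t1 = t2)"

text \<open>Acyclic: the reflexive transitive closure of F is a partial order (it is always
  reflexive and transitive, so this amounts to antisymmetry).\<close>
definition net_acyclic :: "('p, 't) net \<Rightarrow> bool" where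
  "net_acyclic N \<longleftrightarrow> antisym ((flow N)\<^sup>*)"

definition unravel_net :: "('p, 't) net \<Rightarrow> bool" where
  "unravel_net N \<longleftrightarrow>
     is_net N \<and> safe N \<and>
     (\<forall>X \<in> states N. net_acyclic (subnet N (set_mset X)) \<and>
                      net_conflict_free (subnet N (set_mset X))) \<and>
     (\<forall>t \<in> trans N. \<exists>X \<in> states N. t \<in># X)"

text \<open>PPre e = (e,*),  PConf {e,e'} = {e,e'},  PBun Y e = (Y,e),  PPost e = (*,e).\<close>
datatype 'e bplace = PPre 'e | PConf "'e set" | PBun "'e set" 'e | PPost 'e

definition bes_net :: "'e set \<Rightarrow> ('e set \<times> 'e) set \<Rightarrow> 'e rel \<Rightarrow> ('e bplace, 'e) net" where
  "bes_net E bun conf =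
     \<lparr> places = PPre ` E \<union> {PConf {e, e'} | e e'. (e, e') \<in> conf}
               \<union> {PBun Y e | Y e. (Y, e) \<in> bun} \<union> PPost ` E,
       trans = E,
       flow = {(Inl s, Inr e) | s e. e \<in> E \<and>
                 (s = PPre e \<or> (\<exists>Y. s = PBun Y e \<and> (Y, e) \<in> bun)
                  \<or> (\<exists>e'. s = PConf {e, e'} \<and> (e, e') \<in> conf))}
            \<union> {(Inr e, Inl s) | s e. e \<in> E \<and>
                 (s = PPost e \<or> (\<exists>Y e'. s = PBun Y e' \<and> (Y, e') \<in> bun \<and> e \<in> Y))},
       init = (\<lambda>s. if s \<in> PPre ` E \<union> {PConf {e, e'} | e e'. (e, e') \<in> conf} then 1 else 0) \<rparr>"

end

theory Submission
  imports Defs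
begin

text \<open>The places of the net record the progress of a run: (e,*) is marked while e has not
  occurred, {e,e'} while neither e nor e' has, (Y,e) once some event of Y but not yet e has
  occurred, and (*,e) once e has. Hence the marking reached by a firing sequence depends only on
  its events, and an event is enabled exactly when appending it keeps the sequence a trace of
  the bundle event structure: it has not occurred, it conflicts with no occurred event, and each
  of its bundles has been hit. So the states are the multisets of traces, that is, the finite
  configurations. In the subnet generated by a trace, no conflict place feeds two of its events;
  and since the events of a bundle Y of e are pairwise in conflict, an event of Y occurring in a
  trace that contains e must precede e. So the flow strictly increases positions in the trace,
  and the subnet is acyclic.\<close>

lemma fireseq_snoc:
  "fireseq N m (ts @ [t]) m' \<longleftrightarrow> (\<exists>m''. fireseq N m ts m'' \<and> enabled N m'' t \<and> m' = fire N m'' t)"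
  by (induction ts arbitrary: m) auto

lemma finite_down_closed_eq_lessThan:
  fixes I :: "nat set"
  assumes "finite I" "\<forall>i\<in>I. \<forall>j<i. j \<in> I"
  shows "I = {..<card I}"
proof
  show "I \<subseteq> {..<card I}"
  proof
    fix i assume "i \<in> I"
    then have "{..i} \<subseteq> I"
      using assms(2) by (auto simp: le_less)
    then have "card {..i} \<le> card I"
      by (rule card_mono[OF assms(1)])
    then show "i \<in> {..<card I}"
      by simp
  qed
  show "{..<card I} \<subseteq> I"
  proof
    fix j assume j: "j \<in> {..<card I}"
    show "j \<in> I"
    proof (rule ccontr)
      assume "j \<notin> I"
      have "I \<subseteq> {..<j}"
      proof
        fix i assume "i \<in> I"
        with \<open>j \<notin> I\<close> assms(2) have "\<not> j \<le> i"
          by (metis le_neq_implies_less)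
        then show "i \<in> {..<j}"
          by simp
      qed
      then show False
        using j card_mono[of "{..<j}" I] by simp
    qed
  qed
qed

lemma flow_subnet:
  "flow (subnet N T') \<subseteq> flow N \<inter> ((range Inl \<times> Inr ` T') \<union> (Inr ` T' \<times> range Inl))"
  unfolding subnet_def Let_def by auto

lemma antisym_rtrancl_if_rank_increasing:
  fixes rank :: "'a \<Rightarrow> nat"
  assumes "\<And>a b. (a, b) \<in> r \<Longrightarrow> rank a < rank b"
  shows "antisym (r\<^sup>*)"
proof -
  have "r \<subseteq> measure rank"
    using assms by auto
  then show ?thesis
    by (meson acyclic_impl_antisym_rtrancl wf_acyclic wf_measure wf_subset)
qed

definition first_pos :: "'a list \<Rightarrow> 'a \<Rightarrow> nat" where
  "first_pos xs x = length (takeWhile (\<lambda>y. y \<noteq> x) xs)"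

lemma first_pos_append_Cons:
  assumes "x \<notin> set xs"
  shows "first_pos (xs @ x # ys) x = length xs"
proof -
  have "takeWhile (\<lambda>y. y \<noteq> x) xs = xs"
    using assms by (auto simp: takeWhile_eq_all_conv)
  then show ?thesis
    by (simp add: first_pos_def takeWhile_tail)
qed

lemma first_pos_less_length:
  assumes "x \<in> set xs"
  shows "first_pos xs x < length xs"
proof -
  obtain ys zs where "xs = ys @ x # zs" "x \<notin> set ys"
    using split_list_first[OF assms] by blast
  then show ?thesis
    by (simp add: first_pos_append_Cons)
qed

definition bes_trace :: "'e set \<Rightarrow> ('e set \<times> 'e) set \<Rightarrow> 'e rel \<Rightarrow> 'e list \<Rightarrow> bool" where
  "bes_trace E bun conf ts \<longleftrightarrow>
     distinct ts \<and> set ts \<subseteq> E \<and> conflict_free conf (set ts) \<and>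
     (\<forall>i<length ts. \<forall>Z. (Z, ts ! i) \<in> bun \<longrightarrow> Z \<inter> set (take i ts) \<noteq> {})"

definition trace_marking :: "'e set \<Rightarrow> ('e set \<times> 'e) set \<Rightarrow> 'e rel \<Rightarrow> 'e list \<Rightarrow> 'e bplace marking" where
  "trace_marking E bun conf ts s = (case s of
       PPre e \<Rightarrow> if e \<in> E \<and> e \<notin> set ts then 1 else 0
     | PConf c \<Rightarrow> if (\<exists>e e'. c = {e, e'} \<and> (e, e') \<in> conf) \<and> c \<inter> set ts = {} then 1 else 0
     | PBun Y e \<Rightarrow> if (Y, e) \<in> bun \<and> Y \<inter> set ts \<noteq> {} \<and> e \<notin> set ts then 1 else 0
     | PPost e \<Rightarrow> if e \<in> set ts then 1 else 0)"

lemma bes_trace_Nil [simp]: "bes_trace E bun conf []"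
  by (simp add: bes_trace_def conflict_free_def)

lemma bes_trace_snoc:
  assumes "sym conf"
  shows "bes_trace E bun conf (ts @ [t]) \<longleftrightarrow>
           bes_trace E bun conf ts \<and> t \<in> E \<and> t \<notin> set ts \<and>
           (\<forall>e \<in> set ts. (t, e) \<notin> conf) \<and> (\<forall>Z. (Z, t) \<in> bun \<longrightarrow> Z \<inter> set ts \<noteq> {})"
  using assms unfolding bes_trace_def conflict_free_def
  by (auto simp: nth_append dest: symD)

lemma bes_bundle_conflict:
  "bes E bun conf \<Longrightarrow> (Y, e) \<in> bun \<Longrightarrow> x \<in> Y \<Longrightarrow> y \<in> Y \<Longrightarrow> x \<noteq> y \<Longrightarrow> (x, y) \<in> conf"
  unfolding bes_def by blast

lemma bes_trace_bundle_met:
  assumes "bes_trace E bun conf ts" "e \<in> set ts" "(Z, e) \<in> bun"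
  shows "Z \<inter> set ts \<noteq> {}"
proof -
  obtain i where "i < length ts" "ts ! i = e"
    using assms(2) by (auto simp: in_set_conv_nth)
  then have "Z \<inter> set (take i ts) \<noteq> {}"
    using assms(1,3) unfolding bes_trace_def by blast
  then show ?thesis
    using set_take_subset[of i ts] by blast
qed

lemma preset_bes_net:
  "s \<in> preset (bes_net E bun conf) t \<longleftrightarrow>
     t \<in> E \<and> (s = PPre t \<or> (\<exists>Y. s = PBun Y t \<and> (Y, t) \<in> bun) \<or>
                (\<exists>e. s = PConf {t, e} \<and> (t, e) \<in> conf))"
  unfolding preset_def bes_net_def by auto

lemma postset_bes_net:
  "s \<in> postset (bes_net E bun conf) t \<longleftrightarrow>
     t \<in> E \<and> (s = PPost t \<or> (\<exists>Y e. s = PBun Y e \<and> (Y, e) \<in> bun \<and> t \<in> Y))"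
  unfolding postset_def bes_net_def by auto

lemma trans_bes_net [simp]: "trans (bes_net E bun conf) = E"
  by (simp add: bes_net_def)

lemma init_bes_net: "init (bes_net E bun conf) = trace_marking E bun conf []"
  by (rule ext, simp add: bes_net_def trace_marking_def split: bplace.split) blast

lemma is_net_bes_net: "bes E bun conf \<Longrightarrow> is_net (bes_net E bun conf)"
  unfolding is_net_def bes_net_def bes_def by (auto simp: image_iff)

lemma enabled_trace_marking_iff:
  assumes "bes E bun conf" "bes_trace E bun conf ts"
  shows "enabled (bes_net E bun conf) (trace_marking E bun conf ts) t \<longleftrightarrow>
           bes_trace E bun conf (ts @ [t])"
    (is "enabled ?N ?m t \<longleftrightarrow> _")
proof -
  have sym: "sym conf" and irrefl: "irrefl conf"
    using assms(1) by (auto simp: bes_def)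
  have "(\<forall>s \<in> preset ?N t. 1 \<le> ?m s) \<longleftrightarrow>
          t \<notin> set ts \<and> (\<forall>e \<in> set ts. (t, e) \<notin> conf) \<and>
          (\<forall>Z. (Z, t) \<in> bun \<longrightarrow> Z \<inter> set ts \<noteq> {})" if "t \<in> E"
  proof
    assume marked: "\<forall>s \<in> preset ?N t. 1 \<le> ?m s"
    have "1 \<le> ?m (PPre t)" "\<And>e. (t, e) \<in> conf \<Longrightarrow> 1 \<le> ?m (PConf {t, e})"
      "\<And>Z. (Z, t) \<in> bun \<Longrightarrow> 1 \<le> ?m (PBun Z t)"
      using marked that by (auto simp: preset_bes_net)
    then show "t \<notin> set ts \<and> (\<forall>e \<in> set ts. (t, e) \<notin> conf) \<and>
          (\<forall>Z. (Z, t) \<in> bun \<longrightarrow> Z \<inter> set ts \<noteq> {})"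
      by (simp add: trace_marking_def split: if_splits) fastforce
  next
    assume "t \<notin> set ts \<and> (\<forall>e \<in> set ts. (t, e) \<notin> conf) \<and>
          (\<forall>Z. (Z, t) \<in> bun \<longrightarrow> Z \<inter> set ts \<noteq> {})"
    with that irrefl show "\<forall>s \<in> preset ?N t. 1 \<le> ?m s"
      by (auto simp: preset_bes_net trace_marking_def irrefl_def) blast
  qed
  then show ?thesis
    using assms(2) by (auto simp: enabled_def bes_trace_snoc[OF sym])
qed

lemma fire_trace_marking:
  assumes "bes E bun conf" "bes_trace E bun conf (ts @ [t])"
  shows "fire (bes_net E bun conf) (trace_marking E bun conf ts) t = trace_marking E bun conf (ts @ [t])"
proof
  fix s
  have sym: "sym conf"
    using assms(1) by (simp add: bes_def)
  have trace: "bes_trace E bun conf ts" and t: "t \<in> E" "t \<notin> set ts"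
    and no_conf: "\<forall>e \<in> set ts. (t, e) \<notin> conf"
    and met: "\<forall>Z. (Z, t) \<in> bun \<longrightarrow> Z \<inter> set ts \<noteq> {}"
    using assms(2) by (simp_all add: bes_trace_snoc[OF sym])
  show "fire (bes_net E bun conf) (trace_marking E bun conf ts) t s = trace_marking E bun conf (ts @ [t]) s"
  proof (cases s)
    case (PConf c)
    have "t \<in> c \<and> (\<exists>e e'. c = {e, e'} \<and> (e, e') \<in> conf) \<longleftrightarrow> (\<exists>e. c = {t, e} \<and> (t, e) \<in> conf)"
      using sym by (auto simp: doubleton_eq_iff dest: symD)
    with PConf t no_conf show ?thesis
      by (auto simp: fire_def preset_bes_net postset_bes_net trace_marking_def)
  next
    case (PBun Y e)
    show ?thesis
    proof (cases "(Y, e) \<in> bun \<and> t \<in> Y")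
      case True
      \<comment> \<open>The events of Y are pairwise in conflict, so none of them can precede t.\<close>
      then have "Y \<inter> set ts = {}"
        using bes_bundle_conflict[OF assms(1)] no_conf t(2) by blast
      moreover from this have "e \<notin> set ts" "e \<noteq> t"
        using True met bes_trace_bundle_met[OF trace, of e Y] by blast+
      ultimately show ?thesis
        using PBun True t by (auto simp: fire_def preset_bes_net postset_bes_net trace_marking_def)
    next
      case False
      with PBun t met show ?thesis
        by (auto simp: fire_def preset_bes_net postset_bes_net trace_marking_def)
    qed
  next
    case (PPre e)
    with t show ?thesis
      by (auto simp: fire_def preset_bes_net postset_bes_net trace_marking_def)
  next
    case (PPost e)
    with t show ?thesis
      by (auto simp: fire_def preset_bes_net postset_bes_net trace_marking_def)
  qed
qed

lemma fireseq_bes_net_iff: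
  assumes "bes E bun conf"
  shows "fireseq (bes_net E bun conf) (init (bes_net E bun conf)) ts m \<longleftrightarrow>
           bes_trace E bun conf ts \<and> m = trace_marking E bun conf ts"
proof (induction ts arbitrary: m rule: rev_induct)
  case Nil
  show ?case by (simp add: init_bes_net)
next
  case (snoc t ts)
  have "bes_trace E bun conf (ts @ [t]) \<Longrightarrow> bes_trace E bun conf ts"
    using assms by (simp add: bes_trace_snoc bes_def)
  then show ?case
    using snoc enabled_trace_marking_iff[OF assms] fire_trace_marking[OF assms]
    by (auto simp: fireseq_snoc)
qed

lemma states_bes_net:
  assumes "bes E bun conf"
  shows "states (bes_net E bun conf) = {mset ts | ts. bes_trace E bun conf ts}"
  unfolding states_def fireseq_bes_net_iff[OF assms] by blast

lemma reachable_bes_net: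
  assumes "bes E bun conf"
  shows "reachable (bes_net E bun conf) = trace_marking E bun conf ` {ts. bes_trace E bun conf ts}"
  unfolding reachable_def fireseq_bes_net_iff[OF assms] by blast

lemma safe_bes_net: "bes E bun conf \<Longrightarrow> safe (bes_net E bun conf)"
  by (auto simp: safe_def reachable_bes_net trace_marking_def split: bplace.split)

lemma bes_trace_imp_config:
  assumes "bes_trace E bun conf ts"
  shows "bes_config E bun conf (set ts)"
proof -
  have "distinct ts" "set ts \<subseteq> E" "conflict_free conf (set ts)"
    "\<forall>i<length ts. \<forall>Z. (Z, ts ! i) \<in> bun \<longrightarrow> Z \<inter> set (take i ts) \<noteq> {}"
    using assms unfolding bes_trace_def by auto
  moreover have "set (take i ts) = (!) ts ` {..<i}" if "i < length ts" for i
    using that by (auto simp: set_conv_nth image_iff) (metis nth_take order.strict_trans)+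
  ultimately show ?thesis
    unfolding bes_config_def
    by (intro conjI exI[of _ "(!) ts"] exI[of _ "{..<length ts}"]) (auto simp: bij_betw_nth)
qed

lemma finite_config_imp_bes_trace:
  assumes "finite X" "bes_config E bun conf X"
  obtains ts where "bes_trace E bun conf ts" "set ts = X"
proof -
  obtain f :: "nat \<Rightarrow> _" and I where X: "X \<subseteq> E" "conflict_free conf X"
    and down_closed: "\<forall>i\<in>I. \<forall>j<i. j \<in> I" and bij: "bij_betw f I X"
    and bundles: "\<forall>i\<in>I. \<forall>Z. (Z, f i) \<in> bun \<longrightarrow> Z \<inter> f ` {..<i} \<noteq> {}"
    using assms(2) unfolding bes_config_def by blast
  define n where "n = card I"
  have I: "I = {..<n}"
    unfolding n_def using assms(1) bij down_closed
    by (intro finite_down_closed_eq_lessThan) (auto simp: bij_betw_finite)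
  define ts where "ts = map f [0..<n]"
  have "set ts = X" "distinct ts"
    using bij unfolding ts_def I bij_betw_def by (auto simp: distinct_map atLeast0LessThan)
  moreover have "set (take i ts) = f ` {..<i}" if "i < n" for i
    using that unfolding ts_def by (simp add: take_map atLeast0LessThan)
  ultimately have "bes_trace E bun conf ts"
    using X bundles unfolding bes_trace_def I by (auto simp: ts_def)
  then show ?thesis
    using \<open>set ts = X\<close> that by blast
qed

lemma finite_config_iff_state:
  assumes "bes E bun conf" "finite X"
  shows "bes_config E bun conf X \<longleftrightarrow> mset_set X \<in> states (bes_net E bun conf)"
proof
  assume "bes_config E bun conf X"
  then obtain ts where "bes_trace E bun conf ts" "set ts = X"
    using finite_config_imp_bes_trace assms(2) by blast
  moreover from this have "mset ts = mset_set X"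
    by (metis bes_trace_def mset_set_set)
  ultimately show "mset_set X \<in> states (bes_net E bun conf)"
    unfolding states_bes_net[OF assms(1)] by (metis (mono_tags, lifting) mem_Collect_eq)
next
  assume "mset_set X \<in> states (bes_net E bun conf)"
  then obtain ts where "bes_trace E bun conf ts" "mset ts = mset_set X"
    by (auto simp: states_bes_net[OF assms(1)])
  moreover from this have "set ts = X"
    by (metis assms(2) finite_set_mset_mset_set set_mset_mset)
  ultimately show "bes_config E bun conf X"
    using bes_trace_imp_config by blast
qed

lemma subnet_bes_net_conflict_free:
  assumes "bes_trace E bun conf ts"
  shows "net_conflict_free (subnet (bes_net E bun conf) (set ts))"
  unfolding net_conflict_free_def
proof (intro ballI allI impI)
  fix s t1 t2
  assume "(Inl s, Inr t1) \<in> flow (subnet (bes_net E bun conf) (set ts)) \<and>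
          (Inl s, Inr t2) \<in> flow (subnet (bes_net E bun conf) (set ts))"
  then have "s \<in> preset (bes_net E bun conf) t1" "s \<in> preset (bes_net E bun conf) t2"
    and "t1 \<in> set ts" "t2 \<in> set ts"
    using flow_subnet by (fastforce simp: preset_def)+
  moreover have "conflict_free conf (set ts)"
    using assms by (simp add: bes_trace_def)
  ultimately show "t1 = t2"
    by (auto simp: preset_bes_net conflict_free_def doubleton_eq_iff) blast+
qed

lemma bes_trace_bundle_member_precedes:
  assumes "bes E bun conf" "bes_trace E bun conf (xs @ e # ys)"
    and "(Y, e) \<in> bun" "x \<in> Y" "x \<in> set (xs @ e # ys)"
  shows "x \<in> set xs"
proof -
  let ?ts = "xs @ e # ys"
  have "\<forall>i<length ?ts. \<forall>Z. (Z, ?ts ! i) \<in> bun \<longrightarrow> Z \<inter> set (take i ?ts) \<noteq> {}"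
    using assms(2) by (simp add: bes_trace_def)
  moreover have "length xs < length ?ts" "?ts ! length xs = e" "take (length xs) ?ts = xs"
    by simp_all
  ultimately have "Y \<inter> set xs \<noteq> {}"
    using assms(3) by metis
  then obtain y where "y \<in> Y" "y \<in> set xs"
    by blast
  moreover have "conflict_free conf (set ?ts)"
    using assms(2) by (simp add: bes_trace_def)
  ultimately show ?thesis
    using bes_bundle_conflict[OF assms(1,3) assms(4)] assms(5)
    unfolding conflict_free_def by force
qed

lemma bes_trace_bundle_member_first_pos_less:
  assumes "bes E bun conf" "bes_trace E bun conf ts"
    and "(Y, e) \<in> bun" "x \<in> Y" "x \<in> set ts" "e \<in> set ts"
  shows "first_pos ts x < first_pos ts e"
proof -
  obtain xs ys where ts: "ts = xs @ e # ys"
    using split_list[OF assms(6)] by blast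
  then have "x \<in> set xs"
    using bes_trace_bundle_member_precedes[OF assms(1)] assms(2-5) by metis
  then obtain as bs where xs: "xs = as @ x # bs"
    using split_list by fast
  have "distinct ts"
    using assms(2) by (simp add: bes_trace_def)
  then have "first_pos ts x = length as" "first_pos ts e = length xs"
    using first_pos_append_Cons[of x as "bs @ e # ys"] first_pos_append_Cons[of e xs ys]
    by (auto simp: ts xs)
  then show ?thesis
    by (simp add: xs)
qed

lemma subnet_bes_net_acyclic:
  assumes "bes E bun conf" "bes_trace E bun conf ts"
  shows "net_acyclic (subnet (bes_net E bun conf) (set ts))"
proof -
  define rank where "rank n = (case n of
       Inr e \<Rightarrow> 2 * first_pos ts e + 1
     | Inl (PPost e) \<Rightarrow> 2 * first_pos ts e + 2
     | Inl (PBun Y e) \<Rightarrow> if e \<in> set ts then 2 * first_pos ts e else 2 * length ts + 2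
     | Inl _ \<Rightarrow> 0)" for n
  have "rank a < rank b" if "(a, b) \<in> flow (subnet (bes_net E bun conf) (set ts))" for a b
  proof -
    have "(a, b) \<in> flow (bes_net E bun conf)"
      and "(a, b) \<in> (range Inl \<times> Inr ` set ts) \<union> (Inr ` set ts \<times> range Inl)"
      using that flow_subnet by blast+
    then consider s t where "a = Inl s" "b = Inr t" "t \<in> set ts" "s \<in> preset (bes_net E bun conf) t"
      | s t where "a = Inr t" "b = Inl s" "t \<in> set ts" "s \<in> postset (bes_net E bun conf) t"
      unfolding preset_def postset_def by blast
    then show ?thesis
    proof cases
      case 1
      then show ?thesis
        by (auto simp: preset_bes_net rank_def)
    next
      case 2
      note arc = 2
      consider "s = PPost t" | Y e where "s = PBun Y e" "(Y, e) \<in> bun" "t \<in> Y"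
        using arc(4) by (auto simp: postset_bes_net)
      then show ?thesis
      proof cases
        case 1
        with arc show ?thesis
          by (simp add: rank_def)
      next
        case (2 Y e)
        with arc first_pos_less_length[of t ts]
          bes_trace_bundle_member_first_pos_less[OF assms, of Y e t]
        show ?thesis
          by (auto simp: rank_def)
      qed
    qed
  qed
  then show ?thesis
    unfolding net_acyclic_def by (rule antisym_rtrancl_if_rank_increasing)
qed

theorem mainTheorem3:
  fixes E :: "'e set" and bun :: "('e set \<times> 'e) set" and conf :: "'e rel"
  assumes "bes E bun conf"
    and "\<forall>e \<in> E. \<exists>X. finite X \<and> bes_config E bun conf X \<and> e \<in> X"
  shows "unravel_net (bes_net E bun conf) \<and>
         (\<forall>X. finite X \<and> X \<subseteq> E \<longrightarrow>
              (bes_config E bun conf X \<longleftrightarrow> mset_set X \<in> states (bes_net E bun conf)))"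
proof
  have "net_acyclic (subnet (bes_net E bun conf) (set_mset X)) \<and>
        net_conflict_free (subnet (bes_net E bun conf) (set_mset X))"
    if state: "X \<in> states (bes_net E bun conf)" for X
  proof -
    obtain ts where "bes_trace E bun conf ts" "X = mset ts"
      using state states_bes_net[OF assms(1)] by blast
    then show ?thesis
      using subnet_bes_net_acyclic[OF assms(1)] subnet_bes_net_conflict_free by simp
  qed
  moreover have "\<exists>X \<in> states (bes_net E bun conf). e \<in># X" if "e \<in> E" for e
  proof -
    obtain X where "finite X" "bes_config E bun conf X" "e \<in> X"
      using assms(2) \<open>e \<in> E\<close> by blast
    then have "mset_set X \<in> states (bes_net E bun conf)" "e \<in># mset_set X"
      using finite_config_iff_state[OF assms(1)] by simp_all
    then show ?thesis ..
  qed
  ultimately show "unravel_net (bes_net E bun conf)"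
    using is_net_bes_net[OF assms(1)] safe_bes_net[OF assms(1)]
    unfolding unravel_net_def trans_bes_net by blast
  show "\<forall>X. finite X \<and> X \<subseteq> E \<longrightarrow>
          (bes_config E bun conf X \<longleftrightarrow> mset_set X \<in> states (bes_net E bun conf))"
    using finite_config_iff_state[OF assms(1)] by simp
qed

end
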